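(* Let $(M,\varphi,\xi_\alpha,\eta^\alpha,g)$ be an indefinite almost $\mathcal{S}$-manifold. Then for every $\alpha\in\{1,\dots,r\}$ the tensor field $N^{(2)}_\alpha$ vanishes identically, and for any $X,Y\in\Gamma(\mathfrak{D})$ and any $\alpha\in\{1,\dots,r\}$, \[\eta^\alpha([\varphi X,Y])=\eta^\alpha([\varphi Y,X]).\]
   Context: Let $M$ be a smooth manifold of dimension $2n+r$. An indefinite metric $g.f.f$-structure $(\varphi,\xi_\alpha,\eta^\alpha,g)$, $\alpha=1,\dots,r$, on $M$ consists of a $(1,1)$-tensor field $\varphi$ of constant rank with $\varphi^3+\varphi=0$, vector fields $\xi_1,\dots,\xi_r$, $1$-forms $\eta^1,\dots,\eta^r$ and a semi-Riemannian metric $g$ of index $\nu$, $0<\nu<2n+r$, such that $\varphi^2=-I+\sum_\alpha\eta^\alpha\otimes\xi_\alpha$, $\eta^\alpha(\xi_\beta)=\delta^\alpha_\beta$, $g(\varphi X,\varphi Y)=g(X,Y)-\sum_\alpha\varepsilon_\alpha\eta^\alpha(X)\eta^\alpha(Y)$ and $\varepsilon_\alpha g(X,\xi_\alpha)=\eta^\alpha(X)$ for all vector fields $X,Y$, where $\varepsilon_\alpha=g(\xi_\alpha,\xi_\alpha)\in\{1,-1\}$. Put $\mathfrak{D}=\operatorname{Im}\varphi$. The fundamental $2$-form is $\Phi(X,Y)=g(X,\varphi Y)$. The exterior derivative convention is $d\omega(X,Y)=\tfrac12\big(X(\omega(Y))-Y(\omega(X))-\omega([X,Y])\big)$. The manifold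 is an indefinite almost $\mathcal{S}$-manifold if $d\eta^\alpha=\Phi$ for all $\alpha$. For each $\alpha$, $N^{(2)}_\alpha(X,Y)=(\mathcal{L}_{\varphi X}\eta^\alpha)(Y)-(\mathcal{L}_{\varphi Y}\eta^\alpha)(X)=2d\eta^\alpha(\varphi X,Y)-2d\eta^\alpha(\varphi Y,X)$. *)

theory Defs
  imports Complex_Main
begin

(* Smooth functions on M are modelled by a function algebra C of real-valued
   functions on the point type 'p; smooth vector fields are the derivations
   of C (for C = C^infinity(M) these are exactly the vector fields on M). *)

type_synonym 'p fn = "'p \<Rightarrow> real"
type_synonym 'p vf = "'p fn \<Rightarrow> 'p fn"

definition fun_algebra :: "'p fn set \<Rightarrow> bool" where
  "fun_algebra C \<longleftrightarrow> (\<forall>c. (\<lambda>_. c) \<in> C) \<and>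
     (\<forall>f\<in>C. \<forall>h\<in>C. (\<lambda>p. f p + h p) \<in> C \<and> (\<lambda>p. f p * h p) \<in> C)"

definition vector_fields :: "'p fn set \<Rightarrow> 'p vf set" where
  "vector_fields C = {X.
     (\<forall>f\<in>C. X f \<in> C) \<and>
     (\<forall>f. f \<notin> C \<longrightarrow> X f = (\<lambda>_. 0)) \<and>
     (\<forall>f\<in>C. \<forall>h\<in>C. X (\<lambda>p. f p + h p) = (\<lambda>p. X f p + X h p)) \<and>
     (\<forall>c. \<forall>f\<in>C. X (\<lambda>p. c * f p) = (\<lambda>p. c * X f p)) \<and>
     (\<forall>f\<in>C. \<forall>h\<in>C. X (\<lambda>p. f p * h p) = (\<lambda>p. X f p * h p + f p * X h p))}"

definition vf_add :: "'p vf \<Rightarrow> 'p vf \<Rightarrow> 'p vf" where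
  "vf_add X Y = (\<lambda>f p. X f p + Y f p)"

definition vf_smul :: "'p fn \<Rightarrow> 'p vf \<Rightarrow> 'p vf" where
  "vf_smul h X = (\<lambda>f p. h p * X f p)"

definition vf_neg :: "'p vf \<Rightarrow> 'p vf" where
  "vf_neg X = (\<lambda>f p. - X f p)"

definition vf_zero :: "'p vf" where
  "vf_zero = (\<lambda>f p. 0)"

definition lie_bracket :: "'p vf \<Rightarrow> 'p vf \<Rightarrow> 'p vf" where
  "lie_bracket X Y = (\<lambda>f p. X (Y f) p - Y (X f) p)"

definition tensor11 :: "'p fn set \<Rightarrow> ('p vf \<Rightarrow> 'p vf) \<Rightarrow> bool" where
  "tensor11 C \<phi> \<longleftrightarrow> (\<forall>X\<in>vector_fields C. \<phi> X \<in> vector_fields C) \<and>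
     (\<forall>X\<in>vector_fields C. \<forall>Y\<in>vector_fields C. \<phi> (vf_add X Y) = vf_add (\<phi> X) (\<phi> Y)) \<and>
     (\<forall>h\<in>C. \<forall>X\<in>vector_fields C. \<phi> (vf_smul h X) = vf_smul h (\<phi> X))"

definition one_form :: "'p fn set \<Rightarrow> ('p vf \<Rightarrow> 'p fn) \<Rightarrow> bool" where
  "one_form C \<omega> \<longleftrightarrow> (\<forall>X\<in>vector_fields C. \<omega> X \<in> C) \<and>
     (\<forall>X\<in>vector_fields C. \<forall>Y\<in>vector_fields C. \<omega> (vf_add X Y) = (\<lambda>p. \<omega> X p + \<omega> Y p)) \<and>
     (\<forall>h\<in>C. \<forall>X\<in>vector_fields C. \<omega> (vf_smul h X) = (\<lambda>p. h p * \<omega> X p))"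

definition semi_riemannian_indef :: "'p fn set \<Rightarrow> ('p vf \<Rightarrow> 'p vf \<Rightarrow> 'p fn) \<Rightarrow> bool" where
  "semi_riemannian_indef C g \<longleftrightarrow>
     (\<forall>X\<in>vector_fields C. one_form C (g X)) \<and>
     (\<forall>X\<in>vector_fields C. \<forall>Y\<in>vector_fields C. g X Y = g Y X) \<and>
     (\<forall>X\<in>vector_fields C. (\<forall>Y\<in>vector_fields C. g X Y = (\<lambda>_. 0)) \<longrightarrow> X = vf_zero) \<and>
     (\<exists>X\<in>vector_fields C. \<exists>p. g X X p < 0) \<and>
     (\<exists>X\<in>vector_fields C. \<exists>p. g X X p > 0)"

definition indef_metric_gff ::
  "'p fn set \<Rightarrow> nat \<Rightarrow> ('p vf \<Rightarrow> 'p vf) \<Rightarrow> (nat \<Rightarrow> 'p vf) \<Rightarrow> (nat \<Rightarrow> 'p vf \<Rightarrow> 'p fn)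
    \<Rightarrow> ('p vf \<Rightarrow> 'p vf \<Rightarrow> 'p fn) \<Rightarrow> (nat \<Rightarrow> real) \<Rightarrow> bool" where
  "indef_metric_gff C r \<phi> \<xi> \<eta> g \<epsilon> \<longleftrightarrow>
     fun_algebra C \<and> tensor11 C \<phi> \<and> semi_riemannian_indef C g \<and>
     (\<forall>\<alpha>\<in>{1..r}. \<xi> \<alpha> \<in> vector_fields C \<and> one_form C (\<eta> \<alpha>)) \<and>
     (\<forall>X\<in>vector_fields C. vf_add (\<phi> (\<phi> (\<phi> X))) (\<phi> X) = vf_zero) \<and>
     (\<forall>X\<in>vector_fields C. \<phi> (\<phi> X) =
        (\<lambda>f p. - X f p + (\<Sum>\<alpha>\<in>{1..r}. \<eta> \<alpha> X p * \<xi> \<alpha> f p))) \<and>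
     (\<forall>\<alpha>\<in>{1..r}. \<forall>\<beta>\<in>{1..r}. \<eta> \<alpha> (\<xi> \<beta>) = (\<lambda>_. if \<alpha> = \<beta> then 1 else 0)) \<and>
     (\<forall>X\<in>vector_fields C. \<forall>Y\<in>vector_fields C. g (\<phi> X) (\<phi> Y) =
        (\<lambda>p. g X Y p - (\<Sum>\<alpha>\<in>{1..r}. \<epsilon> \<alpha> * \<eta> \<alpha> X p * \<eta> \<alpha> Y p))) \<and>
     (\<forall>\<alpha>\<in>{1..r}. \<epsilon> \<alpha> \<in> {1, -1} \<and> g (\<xi> \<alpha>) (\<xi> \<alpha>) = (\<lambda>_. \<epsilon> \<alpha>)) \<and>
     (\<forall>\<alpha>\<in>{1..r}. \<forall>X\<in>vector_fields C. (\<lambda>p. \<epsilon> \<alpha> * g X (\<xi> \<alpha>) p) = \<eta> \<alpha> X)"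

definition fund_form :: "('p vf \<Rightarrow> 'p vf) \<Rightarrow> ('p vf \<Rightarrow> 'p vf \<Rightarrow> 'p fn) \<Rightarrow> 'p vf \<Rightarrow> 'p vf \<Rightarrow> 'p fn" where
  "fund_form \<phi> g X Y = g X (\<phi> Y)"

text \<open>exterior derivative of a 1-form, with the factor 1/2 convention\<close>
definition ext_d :: "('p vf \<Rightarrow> 'p fn) \<Rightarrow> 'p vf \<Rightarrow> 'p vf \<Rightarrow> 'p fn" where
  "ext_d \<omega> X Y = (\<lambda>p. (1/2) * (X (\<omega> Y) p - Y (\<omega> X) p - \<omega> (lie_bracket X Y) p))"

definition lie_deriv_form :: "'p vf \<Rightarrow> ('p vf \<Rightarrow> 'p fn) \<Rightarrow> 'p vf \<Rightarrow> 'p fn" where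
  "lie_deriv_form X \<omega> Y = (\<lambda>p. X (\<omega> Y) p - \<omega> (lie_bracket X Y) p)"

definition N2 :: "('p vf \<Rightarrow> 'p vf) \<Rightarrow> (nat \<Rightarrow> 'p vf \<Rightarrow> 'p fn) \<Rightarrow> nat \<Rightarrow> 'p vf \<Rightarrow> 'p vf \<Rightarrow> 'p fn" where
  "N2 \<phi> \<eta> \<alpha> X Y = (\<lambda>p. lie_deriv_form (\<phi> X) (\<eta> \<alpha>) Y p - lie_deriv_form (\<phi> Y) (\<eta> \<alpha>) X p)"

definition indef_almost_S ::
  "'p fn set \<Rightarrow> nat \<Rightarrow> ('p vf \<Rightarrow> 'p vf) \<Rightarrow> (nat \<Rightarrow> 'p vf) \<Rightarrow> (nat \<Rightarrow> 'p vf \<Rightarrow> 'p fn)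
    \<Rightarrow> ('p vf \<Rightarrow> 'p vf \<Rightarrow> 'p fn) \<Rightarrow> (nat \<Rightarrow> real) \<Rightarrow> bool" where
  "indef_almost_S C r \<phi> \<xi> \<eta> g \<epsilon> \<longleftrightarrow> indef_metric_gff C r \<phi> \<xi> \<eta> g \<epsilon> \<and>
     (\<forall>\<alpha>\<in>{1..r}. \<forall>X\<in>vector_fields C. \<forall>Y\<in>vector_fields C.
        ext_d (\<eta> \<alpha>) X Y = fund_form \<phi> g X Y)"

text \<open>sections of D = Im phi\<close>
definition sections_D :: "'p fn set \<Rightarrow> ('p vf \<Rightarrow> 'p vf) \<Rightarrow> 'p vf set" where
  "sections_D C \<phi> = {X \<in> vector_fields C. \<exists>Z\<in>vector_fields C. X = \<phi> Z}"

end

theory Submission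
  imports Defs
begin

text \<open>Combining \<open>\<phi>\<^sup>3 + \<phi> = 0\<close> with \<open>\<phi>\<^sup>2 = -I + \<Sum> \<eta>\<^sup>\<alpha> \<otimes> \<xi>\<^sub>\<alpha>\<close> at \<open>\<phi>X\<close> gives
  \<open>\<Sum> \<eta>\<^sup>\<alpha>(\<phi>X) \<xi>\<^sub>\<alpha> = 0\<close>, and evaluating \<open>\<eta>\<^sup>\<beta>\<close> on this sum shows \<open>\<eta>\<^sup>\<beta> \<circ> \<phi> = 0\<close>.
  This kills the terms \<open>Y(\<eta>\<^sup>\<alpha>(\<phi>X))\<close> and \<open>X(\<eta>\<^sup>\<alpha>(\<phi>Y))\<close>, so that
  \<open>N2\<^sub>\<alpha>(X,Y) = 2d\<eta>\<^sup>\<alpha>(\<phi>X,Y) - 2d\<eta>\<^sup>\<alpha>(\<phi>Y,X) = 2g(\<phi>X,\<phi>Y) - 2g(\<phi>Y,\<phi>X) = 0\<close>.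
  For \<open>X, Y\<close> in \<open>\<D>\<close> moreover \<open>\<eta>\<^sup>\<alpha>(X) = \<eta>\<^sup>\<alpha>(Y) = 0\<close>, and then
  \<open>N2\<^sub>\<alpha>(X,Y) = \<eta>\<^sup>\<alpha>([\<phi>Y,X]) - \<eta>\<^sup>\<alpha>([\<phi>X,Y])\<close>.\<close>

lemma vf_zero_mem_vector_fields: "fun_algebra C \<Longrightarrow> vf_zero \<in> vector_fields C"
  unfolding vector_fields_def vf_zero_def fun_algebra_def by auto

lemma vf_add_mem_vector_fields:
  assumes "fun_algebra C" "X \<in> vector_fields C" "Y \<in> vector_fields C"
  shows "vf_add X Y \<in> vector_fields C"
  using assms unfolding fun_algebra_def vector_fields_def vf_add_def
  by (auto simp: algebra_simps fun_eq_iff)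

lemma vf_smul_mem_vector_fields:
  assumes "fun_algebra C" "h \<in> C" "X \<in> vector_fields C"
  shows "vf_smul h X \<in> vector_fields C"
  using assms unfolding fun_algebra_def vector_fields_def vf_smul_def
  by (auto simp: algebra_simps fun_eq_iff)

lemma vector_field_const_zero:
  assumes "fun_algebra C" "X \<in> vector_fields C"
  shows "X (\<lambda>_. 0) = (\<lambda>_. 0)"
proof -
  have "(\<lambda>_. 0::real) \<in> C" using assms(1) unfolding fun_algebra_def by auto
  moreover have "\<forall>c. \<forall>f\<in>C. X (\<lambda>p. c * f p) = (\<lambda>p. c * X f p)"
    using assms(2) unfolding vector_fields_def by blast
  ultimately have "X (\<lambda>p. 0 * 0) = (\<lambda>p. 0 * X (\<lambda>_. 0) p)" by fastforce
  then show ?thesis by simp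
qed

lemma tensor11_mem_vector_fields:
  "tensor11 C \<phi> \<Longrightarrow> X \<in> vector_fields C \<Longrightarrow> \<phi> X \<in> vector_fields C"
  unfolding tensor11_def by blast

lemma one_form_vf_zero:
  assumes C: "fun_algebra C" and \<omega>: "one_form C \<omega>"
  shows "\<omega> vf_zero = (\<lambda>_. 0)"
proof -
  have "vf_add vf_zero vf_zero = (vf_zero :: 'a vf)" unfolding vf_add_def vf_zero_def by simp
  then have "\<omega> vf_zero = (\<lambda>p. \<omega> vf_zero p + \<omega> vf_zero p)"
    using \<omega> vf_zero_mem_vector_fields[OF C] unfolding one_form_def by metis
  then show ?thesis by (auto simp: fun_eq_iff dest: fun_cong)
qed

lemma sum_smul_mem_vector_fields:
  assumes C: "fun_algebra C" and "finite A"
    and "\<forall>a\<in>A. h a \<in> C" and "\<forall>a\<in>A. Z a \<in> vector_fields C"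
  shows "(\<lambda>f p. \<Sum>a\<in>A. h a p * Z a f p) \<in> vector_fields C"
  using assms(2-)
proof (induction A rule: finite_induct)
  case empty
  then show ?case using vf_zero_mem_vector_fields[OF C] by (simp add: vf_zero_def)
next
  case (insert x F)
  have "(\<lambda>f p. \<Sum>a\<in>insert x F. h a p * Z a f p)
      = vf_add (vf_smul (h x) (Z x)) (\<lambda>f p. \<Sum>a\<in>F. h a p * Z a f p)"
    using insert.hyps by (simp add: vf_add_def vf_smul_def fun_eq_iff)
  then show ?case
    using insert by (simp add: vf_add_mem_vector_fields vf_smul_mem_vector_fields C)
qed

lemma one_form_sum_smul:
  assumes C: "fun_algebra C" and \<omega>: "one_form C \<omega>" and "finite A"
    and h: "\<forall>a\<in>A. h a \<in> C" and Z: "\<forall>a\<in>A. Z a \<in> vector_fields C"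
  shows "\<omega> (\<lambda>f p. \<Sum>a\<in>A. h a p * Z a f p) = (\<lambda>p. \<Sum>a\<in>A. h a p * \<omega> (Z a) p)"
  using assms(3-)
proof (induction A rule: finite_induct)
  case empty
  then show ?case using one_form_vf_zero[OF C \<omega>] by (simp add: vf_zero_def)
next
  case (insert x F)
  let ?S = "\<lambda>f p. \<Sum>a\<in>F. h a p * Z a f p"
  have S: "?S \<in> vector_fields C"
    using insert.prems sum_smul_mem_vector_fields[OF C insert.hyps(1)] by simp
  have hZ: "h x \<in> C" "Z x \<in> vector_fields C" "vf_smul (h x) (Z x) \<in> vector_fields C"
    using insert.prems vf_smul_mem_vector_fields[OF C] by auto
  have "(\<lambda>f p. \<Sum>a\<in>insert x F. h a p * Z a f p) = vf_add (vf_smul (h x) (Z x)) ?S"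
    using insert.hyps by (simp add: vf_add_def vf_smul_def fun_eq_iff)
  moreover have "\<omega> (vf_add (vf_smul (h x) (Z x)) ?S) = (\<lambda>p. h x p * \<omega> (Z x) p + \<omega> ?S p)"
    using \<omega> S hZ unfolding one_form_def by simp
  ultimately show ?case using insert by simp
qed

lemma one_form_comp_f_structure_eq_zero:
  fixes r :: nat
  assumes C: "fun_algebra C" and T: "tensor11 C \<phi>"
    and \<xi>\<eta>: "\<forall>\<alpha>\<in>{1..r}. \<xi> \<alpha> \<in> vector_fields C \<and> one_form C (\<eta> \<alpha>)"
    and cube: "\<forall>X\<in>vector_fields C. vf_add (\<phi> (\<phi> (\<phi> X))) (\<phi> X) = vf_zero"
    and square: "\<forall>X\<in>vector_fields C. \<phi> (\<phi> X) =
        (\<lambda>f p. - X f p + (\<Sum>\<alpha>\<in>{1..r}. \<eta> \<alpha> X p * \<xi> \<alpha> f p))"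
    and dual: "\<forall>\<alpha>\<in>{1..r}. \<forall>\<beta>\<in>{1..r}. \<eta> \<alpha> (\<xi> \<beta>) = (\<lambda>_. if \<alpha> = \<beta> then 1 else 0)"
    and \<beta>: "\<beta> \<in> {1..r}" and X: "X \<in> vector_fields C"
  shows "\<eta> \<beta> (\<phi> X) = (\<lambda>_. 0)"
proof -
  have \<phi>X: "\<phi> X \<in> vector_fields C" using tensor11_mem_vector_fields[OF T X] .
  have "vf_add (\<phi> (\<phi> (\<phi> X))) (\<phi> X) = vf_zero" using cube X by blast
  moreover have "\<phi> (\<phi> (\<phi> X)) = (\<lambda>f p. - \<phi> X f p + (\<Sum>\<alpha>\<in>{1..r}. \<eta> \<alpha> (\<phi> X) p * \<xi> \<alpha> f p))"
    using square \<phi>X by blast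
  ultimately have vanish: "(\<lambda>f p. \<Sum>\<alpha>\<in>{1..r}. \<eta> \<alpha> (\<phi> X) p * \<xi> \<alpha> f p) = vf_zero"
    unfolding vf_add_def vf_zero_def by (simp add: fun_eq_iff)
  have \<eta>\<beta>: "one_form C (\<eta> \<beta>)" using \<xi>\<eta> \<beta> by blast
  have coeffs: "\<forall>\<alpha>\<in>{1..r}. \<eta> \<alpha> (\<phi> X) \<in> C" using \<xi>\<eta> \<phi>X unfolding one_form_def by blast
  have \<xi>: "\<forall>\<alpha>\<in>{1..r}. \<xi> \<alpha> \<in> vector_fields C" using \<xi>\<eta> by blast
  have "(\<lambda>_. 0) = \<eta> \<beta> vf_zero" using one_form_vf_zero[OF C \<eta>\<beta>] by simp
  also have "\<dots> = (\<lambda>p. \<Sum>\<alpha>\<in>{1..r}. \<eta> \<alpha> (\<phi> X) p * \<eta> \<beta> (\<xi> \<alpha>) p)"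
    using one_form_sum_smul[OF C \<eta>\<beta> finite_atLeastAtMost[of 1 r] coeffs \<xi>] unfolding vanish .
  also have "\<dots> = (\<lambda>p. \<Sum>\<alpha>\<in>{1..r}. if \<alpha> = \<beta> then \<eta> \<alpha> (\<phi> X) p else 0)"
    using dual \<beta> by (intro ext sum.cong) auto
  also have "\<dots> = \<eta> \<beta> (\<phi> X)" using \<beta> by (simp add: sum.delta)
  finally show ?thesis ..
qed

lemma indef_metric_gff_eta_phi_eq_zero:
  assumes S: "indef_metric_gff C r \<phi> \<xi> \<eta> g \<epsilon>" and \<beta>: "\<beta> \<in> {1..r}"
    and X: "X \<in> vector_fields C"
  shows "\<eta> \<beta> (\<phi> X) = (\<lambda>_. 0)"
  \<comment> \<open>The explicit instantiation avoids a higher-order unification problem for \<open>\<eta> \<beta> (\<phi> X)\<close>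
    that makes plain rule application diverge.\<close>
  using S unfolding indef_metric_gff_def
  by (elim conjE)
    (rule one_form_comp_f_structure_eq_zero[where \<phi> = \<phi> and \<xi> = \<xi> and \<eta> = \<eta>, OF _ _ _ _ _ _ \<beta> X];
     assumption)

lemma N2_eq_ext_d_diff:
  assumes "fun_algebra C" "X \<in> vector_fields C" "Y \<in> vector_fields C"
    and "\<eta> \<alpha> (\<phi> X) = (\<lambda>_. 0)" "\<eta> \<alpha> (\<phi> Y) = (\<lambda>_. 0)"
  shows "N2 \<phi> \<eta> \<alpha> X Y = (\<lambda>p. 2 * (ext_d (\<eta> \<alpha>) (\<phi> X) Y p - ext_d (\<eta> \<alpha>) (\<phi> Y) X p))"
  unfolding N2_def lie_deriv_form_def ext_d_def assms(4,5)
    vector_field_const_zero[OF assms(1,2)] vector_field_const_zero[OF assms(1,3)]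
  by (simp add: algebra_simps)

lemma N2_eq_bracket_diff:
  assumes "fun_algebra C" "tensor11 C \<phi>" "X \<in> vector_fields C" "Y \<in> vector_fields C"
    and "\<eta> \<alpha> X = (\<lambda>_. 0)" "\<eta> \<alpha> Y = (\<lambda>_. 0)"
  shows "N2 \<phi> \<eta> \<alpha> X Y = (\<lambda>p. \<eta> \<alpha> (lie_bracket (\<phi> Y) X) p - \<eta> \<alpha> (lie_bracket (\<phi> X) Y) p)"
  using assms vector_field_const_zero[OF assms(1)] tensor11_mem_vector_fields[OF assms(2)]
  by (simp add: N2_def lie_deriv_form_def)

lemma indef_almost_S_gff:
  "indef_almost_S C r \<phi> \<xi> \<eta> g \<epsilon> \<Longrightarrow> indef_metric_gff C r \<phi> \<xi> \<eta> g \<epsilon>"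
  unfolding indef_almost_S_def by blast

lemma indef_metric_gff_eta_sections_D_eq_zero:
  assumes S: "indef_metric_gff C r \<phi> \<xi> \<eta> g \<epsilon>" and \<beta>: "\<beta> \<in> {1..r}"
    and X: "X \<in> sections_D C \<phi>"
  shows "\<eta> \<beta> X = (\<lambda>_. 0)"
proof -
  obtain Z where "Z \<in> vector_fields C" "X = \<phi> Z" using X unfolding sections_D_def by blast
  then show ?thesis using indef_metric_gff_eta_phi_eq_zero[OF S \<beta>] by simp
qed

lemma N2_indef_almost_S_eq_zero:
  assumes S: "indef_almost_S C r \<phi> \<xi> \<eta> g \<epsilon>" and \<alpha>: "\<alpha> \<in> {1..r}"
    and X: "X \<in> vector_fields C" and Y: "Y \<in> vector_fields C"
  shows "N2 \<phi> \<eta> \<alpha> X Y = (\<lambda>_. 0)"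
proof -
  have gff: "indef_metric_gff C r \<phi> \<xi> \<eta> g \<epsilon>" using indef_almost_S_gff[OF S] .
  have C: "fun_algebra C" and T: "tensor11 C \<phi>" and G: "semi_riemannian_indef C g"
    using gff unfolding indef_metric_gff_def by blast+
  have \<phi>X: "\<phi> X \<in> vector_fields C" and \<phi>Y: "\<phi> Y \<in> vector_fields C"
    using tensor11_mem_vector_fields[OF T] X Y by blast+
  have "N2 \<phi> \<eta> \<alpha> X Y = (\<lambda>p. 2 * (g (\<phi> X) (\<phi> Y) p - g (\<phi> Y) (\<phi> X) p))"
    using N2_eq_ext_d_diff[OF C X Y] indef_metric_gff_eta_phi_eq_zero[OF gff \<alpha>] S \<alpha> X Y \<phi>X \<phi>Y
    unfolding indef_almost_S_def fund_form_def by simp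
  also have "\<dots> = (\<lambda>_. 0)"
    using G \<phi>X \<phi>Y unfolding semi_riemannian_indef_def by simp
  finally show ?thesis .
qed

lemma eta_lie_bracket_sections_D_indef_almost_S:
  assumes S: "indef_almost_S C r \<phi> \<xi> \<eta> g \<epsilon>" and \<alpha>: "\<alpha> \<in> {1..r}"
    and X: "X \<in> sections_D C \<phi>" and Y: "Y \<in> sections_D C \<phi>"
  shows "\<eta> \<alpha> (lie_bracket (\<phi> X) Y) = \<eta> \<alpha> (lie_bracket (\<phi> Y) X)"
proof -
  have gff: "indef_metric_gff C r \<phi> \<xi> \<eta> g \<epsilon>" using indef_almost_S_gff[OF S] .
  have C: "fun_algebra C" and T: "tensor11 C \<phi>" using gff unfolding indef_metric_gff_def by blast+
  have XY: "X \<in> vector_fields C" "Y \<in> vector_fields C" using X Y unfolding sections_D_def by auto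
  have "(\<lambda>p. \<eta> \<alpha> (lie_bracket (\<phi> Y) X) p - \<eta> \<alpha> (lie_bracket (\<phi> X) Y) p) = (\<lambda>_. 0)"
    using N2_eq_bracket_diff[OF C T XY] N2_indef_almost_S_eq_zero[OF S \<alpha> XY]
      indef_metric_gff_eta_sections_D_eq_zero[OF gff \<alpha>] X Y by simp
  then show ?thesis by (simp add: fun_eq_iff)
qed

theorem mainTheorem1:
  fixes C :: "'p fn set" and r :: nat and \<phi> :: "'p vf \<Rightarrow> 'p vf"
    and \<xi> :: "nat \<Rightarrow> 'p vf" and \<eta> :: "nat \<Rightarrow> 'p vf \<Rightarrow> 'p fn"
    and g :: "'p vf \<Rightarrow> 'p vf \<Rightarrow> 'p fn" and \<epsilon> :: "nat \<Rightarrow> real"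
  assumes "indef_almost_S C r \<phi> \<xi> \<eta> g \<epsilon>"
  shows "(\<forall>\<alpha>\<in>{1..r}. \<forall>X\<in>vector_fields C. \<forall>Y\<in>vector_fields C. N2 \<phi> \<eta> \<alpha> X Y = (\<lambda>_. 0))
       \<and> (\<forall>X\<in>sections_D C \<phi>. \<forall>Y\<in>sections_D C \<phi>. \<forall>\<alpha>\<in>{1..r}.
            \<eta> \<alpha> (lie_bracket (\<phi> X) Y) = \<eta> \<alpha> (lie_bracket (\<phi> Y) X))"
  using N2_indef_almost_S_eq_zero[OF assms] eta_lie_bracket_sections_D_indef_almost_S[OF assms]
  by blast

end
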